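(* Let $m$ be a positive integer and let $\mathcal D$ be a distribution on $G_m\times\{0,1\}$, where $G_m=\{0,1/m,\ldots,1\}$. Then $\mathsf{CDL}(\mathcal D)\le2\,\mathsf{SCDL}_m(\mathcal D)+2/m$.
   Context: For $x\in\mathbb R$ write $x_+=\max\{x,0\}$. For a distribution $\mathcal D$ of $(p,y)\in[0,1]\times\{0,1\}$ and $i\in\{0,\ldots,m\}$, let $w_i(p)=(1-|mp-i|)_+$, $\pi_i=\mathbb E_{\mathcal D}[w_i(p)]$ and $q_i=\mathbb E_{\mathcal D}[w_i(p)y]/\pi_i$ (terms with $\pi_i=0$ are $0$; when $p\in G_m$ these are $\Pr[p=i/m]$ and $\mathbb E[y\mid p=i/m]$). Define $$\mathsf{SCDL}_m(\mathcal D)=\max_{i=0,\ldots,m}\Big(\sum_{j=0}^{i}\pi_j\big(q_j-\tfrac{i+1}{m}\big)_+ +\sum_{j=i+1}^{m}\pi_j\big(\tfrac im-q_j\big)_+\Big).$$ A decision task $Z=(A,U)$ has action set $A$ and utility $U:A\times\{0,1\}\to[0,1]$; its best-response function is $r_Z^*(p)\in\arg\max_{a\in A}\mathbb E_{y\sim\mathsf{Ber}(p)}U(a,y)$; the swap regret of a response $r$ is $\mathsf{SR}_Z(r,\mathcal D)=\sup_{\sigma:A\to A}\mathbb E_{(p,y)\sim\mathcal D}[U(\sigma(r(p)),y)-U(r(p),y)]$. The calibration decision loss is $\mathsf{CDL}(\mathcal D)=\sup_Z\mathsf{SR}_Z(r_Z^*,\mathcal D)$ over all such decision tasks. *)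

theory Defs
  imports "HOL-Probability.Probability"
begin

text \<open>Distributions D of (p,y) are pmfs on real \<times> real, with y \<in> {0,1}.\<close>

definition pospart :: "real \<Rightarrow> real" where
  "pospart x = max x 0"

definition grid :: "nat \<Rightarrow> real set" where
  "grid m = {real i / real m | i. i \<le> m}"

definition wgt :: "nat \<Rightarrow> nat \<Rightarrow> real \<Rightarrow> real" where
  "wgt m i p = pospart (1 - \<bar>real m * p - real i\<bar>)"

definition piw :: "nat \<Rightarrow> (real \<times> real) pmf \<Rightarrow> nat \<Rightarrow> real" where
  "piw m D i = measure_pmf.expectation D (\<lambda>(p, y). wgt m i p)"

definition qw :: "nat \<Rightarrow> (real \<times> real) pmf \<Rightarrow> nat \<Rightarrow> real" where
  "qw m D i = (if piw m D i = 0 then 0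
     else measure_pmf.expectation D (\<lambda>(p, y). wgt m i p * y) / piw m D i)"

definition SCDL :: "nat \<Rightarrow> (real \<times> real) pmf \<Rightarrow> real" where
  "SCDL m D = Max ((\<lambda>i. (\<Sum>j\<in>{0..i}. piw m D j * pospart (qw m D j - real (i + 1) / real m))
                   + (\<Sum>j\<in>{i+1..m}. piw m D j * pospart (real i / real m - qw m D j))) ` {0..m})"

definition decision_task :: "'a set \<Rightarrow> ('a \<Rightarrow> real \<Rightarrow> real) \<Rightarrow> bool" where
  "decision_task A U \<longleftrightarrow> A \<noteq> {} \<and> (\<forall>a\<in>A. \<forall>y\<in>{0,1}. 0 \<le> U a y \<and> U a y \<le> 1)"

definition exp_util :: "('a \<Rightarrow> real \<Rightarrow> real) \<Rightarrow> 'a \<Rightarrow> real \<Rightarrow> real" where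
  "exp_util U a p = (1 - p) * U a 0 + p * U a 1"

definition best_response :: "'a set \<Rightarrow> ('a \<Rightarrow> real \<Rightarrow> real) \<Rightarrow> (real \<Rightarrow> 'a) \<Rightarrow> bool" where
  "best_response A U r \<longleftrightarrow>
     (\<forall>p\<in>{0..1}. r p \<in> A \<and> (\<forall>a\<in>A. exp_util U a p \<le> exp_util U (r p) p))"

definition swap_regret ::
  "'a set \<Rightarrow> ('a \<Rightarrow> real \<Rightarrow> real) \<Rightarrow> (real \<Rightarrow> 'a) \<Rightarrow> (real \<times> real) pmf \<Rightarrow> real" where
  "swap_regret A U r D = (SUP \<sigma>\<in>{\<sigma>. \<forall>a\<in>A. \<sigma> a \<in> A}.
      measure_pmf.expectation D (\<lambda>(p, y). U (\<sigma> (r p)) y - U (r p) y))"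

end

theory Submission
  imports Defs
begin

text \<open>Let \<open>L\<^sub>k(q) = \<alpha>\<^sub>k + \<beta>\<^sub>k q\<close> be the expected utility under \<open>Ber(q)\<close> of the best
  response at the grid point \<open>k/m\<close>. Best responding at every grid point forces the slopes
  \<open>\<beta>\<^sub>k\<close> to be nondecreasing, and a line lying below the envelope at all grid points exceeds
  \<open>L\<^sub>j(q)\<close> by at most \<open>\<Sum>\<^sub>i (\<beta>\<^sub>i\<^sub>+\<^sub>1 - \<beta>\<^sub>i)(v\<^sub>i(j,q) + 1/m)\<close>, where \<open>v\<^sub>i(j,q)\<close> is the
  contribution of a cell \<open>j\<close> with level \<open>q\<close> to the \<open>i\<close>-th term of SCDL: telescope from \<open>L\<^sub>j\<close>
  to the line of the grid cell containing \<open>q\<close>, then interpolate inside that cell. Averaging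
  with the cell weights \<open>\<pi>\<^sub>j\<close> at the levels \<open>q\<^sub>j\<close> bounds the swap regret by
  \<open>(\<beta>\<^sub>m - \<beta>\<^sub>0)(SCDL + 1/m)\<close>, and \<open>\<beta>\<^sub>m - \<beta>\<^sub>0 \<le> 2\<close> since utilities lie in \<open>[0,1]\<close>.\<close>

definition threshold_violation :: "nat \<Rightarrow> nat \<Rightarrow> nat \<Rightarrow> real \<Rightarrow> real" where
  "threshold_violation m i j q =
     (if j \<le> i then pospart (q - real (i + 1) / real m) else pospart (real i / real m - q))"

lemma threshold_violation_nonneg: "0 \<le> threshold_violation m i j q"
  by (simp add: threshold_violation_def pospart_def)

lemma affine_le_between:
  fixes u v a b q M :: real
  assumes "a \<le> q" "q \<le> b" "u + v * a \<le> M" "u + v * b \<le> M"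
  shows "u + v * q \<le> M"
proof (cases "v \<ge> 0")
  case True
  then have "v * q \<le> v * b" using assms(2) by (rule mult_left_mono[rotated])
  then show ?thesis using assms(4) by linarith
next
  case False
  then have "v * q \<le> v * a" using assms(1) by (intro mult_left_mono_neg) auto
  then show ?thesis using assms(3) by linarith
qed

lemma grid_cell_exists:
  assumes "m > 0" "0 \<le> q" "q \<le> 1"
  obtains i where "i < m" "real i / real m \<le> q" "q \<le> real (Suc i) / real m"
proof (cases "q < 1")
  case True
  define i where "i = nat \<lfloor>q * real m\<rfloor>"
  have "real i \<le> q * real m" "q * real m < real (Suc i)"
    using assms(2) by (auto simp: i_def) linarith
  moreover have "i < m"
    using True assms by (simp add: i_def nat_less_iff floor_less_iff)
  ultimately show ?thesis using assms(1) that[of i] by (simp add: field_simps)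
next
  case False
  then show ?thesis using assms that[of "m - 1"] by (simp add: of_nat_diff)
qed

lemma grid_step:
  "real (Suc i) / real m - real i / real m = 1 / real m"
  by (simp add: diff_divide_distrib[symmetric])

lemma affine_diff_le:
  fixes a b a' b' x q :: real
  assumes "a' + b' * x \<le> a + b * x"
  shows "(a' + b' * q) - (a + b * q) \<le> (b' - b) * (q - x)"
  using assms by (simp add: algebra_simps)

locale grid_envelope =
  fixes m :: nat and \<alpha> \<beta> :: "nat \<Rightarrow> real"
  assumes m_pos: "m > 0"
    and envelope: "\<And>k k'. k \<le> m \<Longrightarrow> k' \<le> m \<Longrightarrow>
      \<alpha> k' + \<beta> k' * (real k / real m) \<le> \<alpha> k + \<beta> k * (real k / real m)"
begin

abbreviation line :: "nat \<Rightarrow> real \<Rightarrow> real" where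
  "line k q \<equiv> \<alpha> k + \<beta> k * q"

lemma line_Suc_minus_le:
  assumes "i < m"
  shows "line (Suc i) q - line i q \<le> (\<beta> (Suc i) - \<beta> i) * (q - real i / real m)"
  using assms by (intro affine_diff_le envelope) auto

lemma line_minus_Suc_le:
  assumes "i < m"
  shows "line i q - line (Suc i) q \<le> (\<beta> (Suc i) - \<beta> i) * (real (Suc i) / real m - q)"
proof -
  have "line i q - line (Suc i) q \<le> (\<beta> i - \<beta> (Suc i)) * (q - real (Suc i) / real m)"
    using assms by (intro affine_diff_le envelope) auto
  then show ?thesis by argo
qed

lemma slope_mono:
  assumes "i < m"
  shows "\<beta> i \<le> \<beta> (Suc i)"
proof -
  have "0 \<le> (\<beta> (Suc i) - \<beta> i) * (real (Suc i) / real m - real i / real m)"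
    using line_Suc_minus_le[OF assms, of 0] line_minus_Suc_le[OF assms, of 0]
    by (simp add: right_diff_distrib)
  then show ?thesis using m_pos unfolding grid_step by (simp add: zero_le_divide_iff)
qed

lemma line_minus_line_le_up:
  assumes "j \<le> n" "n \<le> m"
  shows "line n q - line j q \<le> (\<Sum>i=j..<n. (\<beta> (Suc i) - \<beta> i) * (q - real i / real m))"
proof -
  have "line n q - line j q = (\<Sum>i=j..<n. line (Suc i) q - line i q)"
    using assms(1) by (rule sum_Suc_diff'[symmetric])
  also have "\<dots> \<le> (\<Sum>i=j..<n. (\<beta> (Suc i) - \<beta> i) * (q - real i / real m))"
    using assms(2) by (intro sum_mono line_Suc_minus_le) auto
  finally show ?thesis .
qed

lemma line_minus_line_le_down:
  assumes "j \<le> n" "n \<le> m"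
  shows "line j q - line n q \<le> (\<Sum>i=j..<n. (\<beta> (Suc i) - \<beta> i) * (real (Suc i) / real m - q))"
proof -
  have "line j q - line n q = (\<Sum>i=j..<n. line i q - line (Suc i) q)"
    using sum_Suc_diff'[OF assms(1), of "\<lambda>i. - line i q"] by (simp add: algebra_simps)
  also have "\<dots> \<le> (\<Sum>i=j..<n. (\<beta> (Suc i) - \<beta> i) * (real (Suc i) / real m - q))"
    using assms(2) by (intro sum_mono line_minus_Suc_le) auto
  finally show ?thesis .
qed

context
  fixes \<gamma> \<delta> :: real
  assumes below: "\<And>k. k \<le> m \<Longrightarrow> \<gamma> + \<delta> * (real k / real m) \<le> line k (real k / real m)"
begin

lemma below_minus_line_le_cell:
  assumes "i < m" "real i / real m \<le> q" "q \<le> real (Suc i) / real m"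
  shows "\<gamma> + \<delta> * q - line i q \<le> (\<beta> (Suc i) - \<beta> i) / real m"
    and "\<gamma> + \<delta> * q - line (Suc i) q \<le> (\<beta> (Suc i) - \<beta> i) / real m"
proof -
  let ?x = "real i / real m" and ?y = "real (Suc i) / real m"
  have affine: "\<gamma> + \<delta> * t - line k t = (\<gamma> - \<alpha> k) + (\<delta> - \<beta> k) * t" for k t
    by (simp add: algebra_simps)
  have gap: "(\<beta> (Suc i) - \<beta> i) / real m = (\<beta> (Suc i) - \<beta> i) * (?y - ?x)"
    unfolding grid_step by simp
  have "0 \<le> (\<beta> (Suc i) - \<beta> i) / real m"
    using slope_mono[OF assms(1)] by simp
  moreover have "line (Suc i) ?y - line i ?y \<le> (\<beta> (Suc i) - \<beta> i) / real m"
    unfolding gap by (rule line_Suc_minus_le[OF assms(1)])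
  moreover have "line i ?x - line (Suc i) ?x \<le> (\<beta> (Suc i) - \<beta> i) / real m"
    unfolding gap by (rule line_minus_Suc_le[OF assms(1)])
  ultimately have "\<gamma> + \<delta> * t - line k t \<le> (\<beta> (Suc i) - \<beta> i) / real m"
    if "k \<in> {i, Suc i}" "t \<in> {?x, ?y}" for k t
    using that below[of i] below[of "Suc i"] assms(1) by auto
  then show "\<gamma> + \<delta> * q - line i q \<le> (\<beta> (Suc i) - \<beta> i) / real m"
    and "\<gamma> + \<delta> * q - line (Suc i) q \<le> (\<beta> (Suc i) - \<beta> i) / real m"
    unfolding affine using assms(2,3) by (blast intro: affine_le_between)+
qed

lemma below_minus_line_le:
  assumes "0 \<le> q" "q \<le> 1" "j \<le> m"
  shows "\<gamma> + \<delta> * q - line j q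
    \<le> (\<Sum>i<m. (\<beta> (Suc i) - \<beta> i) * (threshold_violation m i j q + 1 / real m))"
proof -
  define t where "t i = (\<beta> (Suc i) - \<beta> i) * (threshold_violation m i j q + 1 / real m)" for i
  have t_nonneg: "0 \<le> t i" if "i < m" for i
    using slope_mono[OF that] threshold_violation_nonneg[of m i j q] by (simp add: t_def)
  have cell_le_t: "(\<beta> (Suc i) - \<beta> i) / real m \<le> t i" if "i < m" for i
    using slope_mono[OF that] threshold_violation_nonneg[of m i j q]
    by (simp add: t_def distrib_left)
  have sum_le: "sum t I \<le> (\<Sum>i<m. t i)" if "I \<subseteq> {..<m}" for I
    using that t_nonneg by (intro sum_mono2) auto
  obtain i0 where i0: "i0 < m" "real i0 / real m \<le> q" "q \<le> real (Suc i0) / real m"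
    using grid_cell_exists[OF m_pos assms(1,2)] .
  show ?thesis
  proof (cases "j \<le> i0")
    case True
    have "line i0 q - line j q \<le> (\<Sum>i=j..<i0. (\<beta> (Suc i) - \<beta> i) * (q - real i / real m))"
      using True i0(1) by (intro line_minus_line_le_up) auto
    also have "\<dots> = sum t {j..<i0}"
    proof (rule sum.cong[OF refl])
      fix i assume i: "i \<in> {j..<i0}"
      then have "real (Suc i) / real m \<le> q"
        using i0(2) order_trans[OF divide_right_mono[of "real (Suc i)" "real i0"]] by auto
      then show "(\<beta> (Suc i) - \<beta> i) * (q - real i / real m) = t i"
        using i grid_step[of i m] by (simp add: t_def threshold_violation_def pospart_def)
    qed
    finally have "\<gamma> + \<delta> * q - line j q \<le> t i0 + sum t {j..<i0}"
      using below_minus_line_le_cell(1)[OF i0] cell_le_t[OF i0(1)] by linarith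
    also have "\<dots> = sum t {j..<Suc i0}"
      using True by simp
    also have "\<dots> \<le> (\<Sum>i<m. t i)"
      using i0(1) by (intro sum_le) auto
    finally show ?thesis unfolding t_def .
  next
    case False
    have "line (Suc i0) q - line j q
        \<le> (\<Sum>i=Suc i0..<j. (\<beta> (Suc i) - \<beta> i) * (real (Suc i) / real m - q))"
      using False assms(3) by (intro line_minus_line_le_down) auto
    also have "\<dots> = sum t {Suc i0..<j}"
    proof (rule sum.cong[OF refl])
      fix i assume i: "i \<in> {Suc i0..<j}"
      then have "q \<le> real i / real m"
        using i0(3) order_trans[OF _ divide_right_mono[of "real (Suc i0)" "real i"]] by auto
      then show "(\<beta> (Suc i) - \<beta> i) * (real (Suc i) / real m - q) = t i"
        using i grid_step[of i m] by (simp add: t_def threshold_violation_def pospart_def)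
    qed
    finally have "\<gamma> + \<delta> * q - line j q \<le> t i0 + sum t {Suc i0..<j}"
      using below_minus_line_le_cell(2)[OF i0] cell_le_t[OF i0(1)] by linarith
    also have "\<dots> = sum t {i0..<j}"
      using False by (simp add: sum.atLeast_Suc_lessThan)
    also have "\<dots> \<le> (\<Sum>i<m. t i)"
      using assms(3) by (intro sum_le) auto
    finally show ?thesis unfolding t_def .
  qed
qed

end

lemma weighted_below_minus_line_le:
  fixes \<pi> q \<gamma> \<delta> :: "nat \<Rightarrow> real" and S :: real
  assumes \<pi>_nonneg: "\<And>k. k \<le> m \<Longrightarrow> 0 \<le> \<pi> k" and \<pi>_sum: "(\<Sum>k\<le>m. \<pi> k) = 1"
    and q: "\<And>k. k \<le> m \<Longrightarrow> 0 \<le> q k \<and> q k \<le> 1"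
    and below: "\<And>k k'. k \<le> m \<Longrightarrow> k' \<le> m \<Longrightarrow>
      \<gamma> k + \<delta> k * (real k' / real m) \<le> line k' (real k' / real m)"
    and S: "\<And>i. i < m \<Longrightarrow> (\<Sum>k\<le>m. \<pi> k * threshold_violation m i k (q k)) \<le> S"
  shows "(\<Sum>k\<le>m. \<pi> k * (\<gamma> k + \<delta> k * q k - line k (q k))) \<le> (\<beta> m - \<beta> 0) * (S + 1 / real m)"
proof -
  let ?c = "\<lambda>i. \<beta> (Suc i) - \<beta> i" and ?v = "\<lambda>i k. threshold_violation m i k (q k)"
  have "(\<Sum>k\<le>m. \<pi> k * (\<gamma> k + \<delta> k * q k - line k (q k)))
      \<le> (\<Sum>k\<le>m. \<pi> k * (\<Sum>i<m. ?c i * (?v i k + 1 / real m)))"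
    using \<pi>_nonneg q below by (intro sum_mono mult_left_mono below_minus_line_le) auto
  also have "\<dots> = (\<Sum>k\<le>m. \<Sum>i<m. ?c i * (\<pi> k * ?v i k) + ?c i * \<pi> k / real m)"
    unfolding sum_distrib_left by (intro sum.cong refl) (simp add: distrib_left mult.left_commute)
  also have "\<dots> = (\<Sum>i<m. \<Sum>k\<le>m. ?c i * (\<pi> k * ?v i k) + ?c i * \<pi> k / real m)"
    by (rule sum.swap)
  also have "\<dots> = (\<Sum>i<m. ?c i * ((\<Sum>k\<le>m. \<pi> k * ?v i k) + 1 / real m))"
    unfolding \<pi>_sum[symmetric]
    by (intro sum.cong refl) (simp add: sum.distrib sum_distrib_left sum_divide_distrib distrib_left)
  also have "\<dots> \<le> (\<Sum>i<m. ?c i * (S + 1 / real m))"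
    using S slope_mono by (intro sum_mono mult_left_mono) auto
  also have "\<dots> = (\<beta> m - \<beta> 0) * (S + 1 / real m)"
    by (simp add: sum_lessThan_telescope flip: sum_distrib_right)
  finally show ?thesis .
qed

end

lemma piw_nonneg: "0 \<le> piw m D j"
  unfolding piw_def wgt_def pospart_def by (intro integral_nonneg_AE) (auto split: prod.split)

lemma SCDL_ge:
  assumes "i \<le> m"
  shows "(\<Sum>j\<le>m. piw m D j * threshold_violation m i j (qw m D j)) \<le> SCDL m D"
proof -
  have "{..m} = {0..i} \<union> {i+1..m}" "{0..i} \<inter> {i+1..m} = {}"
    using assms by auto
  then have "(\<Sum>j\<le>m. piw m D j * threshold_violation m i j (qw m D j))
      = (\<Sum>j\<in>{0..i}. piw m D j * pospart (qw m D j - real (i + 1) / real m))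
        + (\<Sum>j\<in>{i+1..m}. piw m D j * pospart (real i / real m - qw m D j))"
    by (simp add: sum.union_disjoint threshold_violation_def)
  also have "\<dots> \<le> SCDL m D"
    unfolding SCDL_def using assms by (intro Max_ge) auto
  finally show ?thesis .
qed

lemma SCDL_nonneg: "0 \<le> SCDL m D"
proof -
  have "0 \<le> (\<Sum>j\<le>m. piw m D j * threshold_violation m 0 j (qw m D j))"
    by (intro sum_nonneg mult_nonneg_nonneg piw_nonneg threshold_violation_nonneg)
  also have "\<dots> \<le> SCDL m D"
    by (rule SCDL_ge) simp
  finally show ?thesis .
qed

lemma wgt_grid_point:
  assumes "m > 0"
  shows "wgt m j (real k / real m) = (if k = j then 1 else 0)"
proof -
  have "real m * (real k / real m) = real k"
    using assms by simp
  moreover have "k \<noteq> j \<Longrightarrow> 1 \<le> \<bar>real k - real j\<bar>"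
    by linarith
  ultimately show ?thesis
    by (simp add: wgt_def pospart_def)
qed

context
  fixes m :: nat and D :: "(real \<times> real) pmf"
  assumes m_pos: "m > 0" and supp: "set_pmf D \<subseteq> grid m \<times> {0, 1}"
begin

lemma expectation_grid_support:
  "measure_pmf.expectation D h
    = (\<Sum>k\<le>m. pmf D (real k / real m, 0) * h (real k / real m, 0)
             + pmf D (real k / real m, 1) * h (real k / real m, 1))"
proof -
  let ?g = "\<lambda>(k::nat, y::real). (real k / real m, y)"
  let ?I = "{..m} \<times> {0::real, 1}"
  have "set_pmf D \<subseteq> ?g ` ?I"
  proof
    fix x assume "x \<in> set_pmf D"
    then obtain i y where "x = (real i / real m, y)" "i \<le> m" "y \<in> {0, 1}"
      using supp unfolding grid_def by blast
    then show "x \<in> ?g ` ?I" by (auto intro!: image_eqI[where x="(i, y)"])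
  qed
  then have "measure_pmf.expectation D h = (\<Sum>x\<in>?g ` ?I. h x * pmf D x)"
    by (intro integral_measure_pmf_real) auto
  also have "\<dots> = (\<Sum>z\<in>?I. h (?g z) * pmf D (?g z))"
    using m_pos by (subst sum.reindex) (auto simp: inj_on_def)
  also have "\<dots> = (\<Sum>k\<le>m. \<Sum>y\<in>{0::real, 1}. h (?g (k, y)) * pmf D (?g (k, y)))"
    by (subst sum.cartesian_product) (simp add: split_def)
  finally show ?thesis by (simp add: mult.commute)
qed

lemma expectation_wgt_grid_support:
  assumes "j \<le> m"
  shows "measure_pmf.expectation D (\<lambda>(p, y). wgt m j p * f y)
    = pmf D (real j / real m, 0) * f 0 + pmf D (real j / real m, 1) * f 1"
proof -
  have "measure_pmf.expectation D (\<lambda>(p, y). wgt m j p * f y)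
      = (\<Sum>k\<le>m. if k = j then pmf D (real j / real m, 0) * f 0 + pmf D (real j / real m, 1) * f 1
                  else 0)"
    unfolding expectation_grid_support by (intro sum.cong refl) (simp add: wgt_grid_point[OF m_pos])
  then show ?thesis
    using assms by simp
qed

lemma piw_grid_support:
  assumes "j \<le> m"
  shows "piw m D j = pmf D (real j / real m, 0) + pmf D (real j / real m, 1)"
  using expectation_wgt_grid_support[OF assms, of "\<lambda>_. 1"] by (simp add: piw_def)

lemma piw_mult_qw_grid_support:
  assumes "j \<le> m"
  shows "piw m D j * qw m D j = pmf D (real j / real m, 1)"
  using expectation_wgt_grid_support[OF assms, of id] piw_grid_support[OF assms]
  by (auto simp: qw_def add_nonneg_eq_0_iff)

lemma qw_grid_support_bounds:
  assumes "j \<le> m"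
  shows "0 \<le> qw m D j \<and> qw m D j \<le> 1"
proof (cases "piw m D j = 0")
  case False
  then have "0 < piw m D j"
    using piw_nonneg[of m D j] by linarith
  moreover have "0 \<le> piw m D j * qw m D j" "piw m D j * qw m D j \<le> piw m D j"
    using piw_mult_qw_grid_support[OF assms] piw_grid_support[OF assms] by simp_all
  ultimately show ?thesis
    by (simp add: zero_le_mult_iff mult_le_cancel_left1)
qed (simp add: qw_def)

lemma expectation_grid_cells:
  "measure_pmf.expectation D h
    = (\<Sum>k\<le>m. piw m D k * ((1 - qw m D k) * h (real k / real m, 0)
                             + qw m D k * h (real k / real m, 1)))"
  unfolding expectation_grid_support
proof (intro sum.cong refl)
  fix k assume "k \<in> {..m}"
  then have "k \<le> m" by simp
  then have "piw m D k = pmf D (real k / real m, 0) + pmf D (real k / real m, 1)"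
    and "piw m D k * qw m D k = pmf D (real k / real m, 1)"
    by (rule piw_grid_support, rule piw_mult_qw_grid_support)
  then show "pmf D (real k / real m, 0) * h (real k / real m, 0)
        + pmf D (real k / real m, 1) * h (real k / real m, 1)
      = piw m D k * ((1 - qw m D k) * h (real k / real m, 0) + qw m D k * h (real k / real m, 1))"
    by algebra
qed

lemma sum_piw_grid_support: "(\<Sum>k\<le>m. piw m D k) = 1"
  using expectation_grid_cells[of "\<lambda>_. 1"] by simp

end

lemma exp_util_affine: "exp_util U a p = U a 0 + (U a 1 - U a 0) * p"
  by (simp add: exp_util_def algebra_simps)

lemma decision_task_slope_diff_le:
  assumes "decision_task A U" "a \<in> A" "b \<in> A"
  shows "(U b 1 - U b 0) - (U a 1 - U a 0) \<le> 2"
proof -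
  have "0 \<le> U c 0 \<and> U c 0 \<le> 1 \<and> 0 \<le> U c 1 \<and> U c 1 \<le> 1" if "c \<in> A" for c
    using assms(1) that unfolding decision_task_def by simp
  from this[OF assms(2)] this[OF assms(3)] show ?thesis
    by linarith
qed

lemma best_response_grid_point:
  assumes "m > 0" "best_response A U r" "k \<le> m"
  shows "r (real k / real m) \<in> A"
    and "b \<in> A \<Longrightarrow> exp_util U b (real k / real m) \<le> exp_util U (r (real k / real m)) (real k / real m)"
proof -
  have "real k / real m \<in> {0..1}"
    using assms(1,3) by auto
  with assms(2) show "r (real k / real m) \<in> A"
    and "b \<in> A \<Longrightarrow> exp_util U b (real k / real m) \<le> exp_util U (r (real k / real m)) (real k / real m)"
    unfolding best_response_def by blast+
qed

lemma expected_swap_gain_le: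
  assumes m_pos: "m > 0" and supp: "set_pmf D \<subseteq> grid m \<times> {0, 1}"
    and task: "decision_task A U" and best: "best_response A U r"
    and \<sigma>: "\<forall>a\<in>A. \<sigma> a \<in> A"
  shows "measure_pmf.expectation D (\<lambda>(p, y). U (\<sigma> (r p)) y - U (r p) y) \<le> 2 * SCDL m D + 2 / real m"
proof -
  define a where "a k = r (real k / real m)" for k
  note a_in_A = best_response_grid_point(1)[OF m_pos best, folded a_def]
  note best_at_grid = best_response_grid_point(2)[OF m_pos best, folded a_def, unfolded exp_util_affine]
  interpret grid_envelope m "\<lambda>k. U (a k) 0" "\<lambda>k. U (a k) 1 - U (a k) 0"
    by unfold_locales (fact m_pos, blast intro: best_at_grid a_in_A)
  have "measure_pmf.expectation D (\<lambda>(p, y). U (\<sigma> (r p)) y - U (r p) y)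
      = (\<Sum>k\<le>m. piw m D k * ((U (\<sigma> (a k)) 0 + (U (\<sigma> (a k)) 1 - U (\<sigma> (a k)) 0) * qw m D k)
          - (U (a k) 0 + (U (a k) 1 - U (a k) 0) * qw m D k)))"
    unfolding expectation_grid_cells[OF m_pos supp]
    by (intro sum.cong refl) (simp add: a_def algebra_simps)
  also have "\<dots> \<le> ((U (a m) 1 - U (a m) 0) - (U (a 0) 1 - U (a 0) 0)) * (SCDL m D + 1 / real m)"
  proof (rule weighted_below_minus_line_le)
    show "(\<Sum>k\<le>m. piw m D k) = 1"
      using m_pos supp by (rule sum_piw_grid_support)
    show "0 \<le> qw m D k \<and> qw m D k \<le> 1" if "k \<le> m" for k
      using m_pos supp that by (rule qw_grid_support_bounds)
    show "U (\<sigma> (a k)) 0 + (U (\<sigma> (a k)) 1 - U (\<sigma> (a k)) 0) * (real k' / real m)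
        \<le> U (a k') 0 + (U (a k') 1 - U (a k') 0) * (real k' / real m)"
      if "k \<le> m" "k' \<le> m" for k k'
      using that \<sigma> a_in_A by (intro best_at_grid) auto
  qed (simp_all add: piw_nonneg SCDL_ge)
  also have "\<dots> \<le> 2 * (SCDL m D + 1 / real m)"
    using decision_task_slope_diff_le[OF task a_in_A[OF le0] a_in_A[OF order_refl]] SCDL_nonneg[of m D]
    by (intro mult_right_mono) auto
  finally show ?thesis
    by simp
qed

theorem lemma4p7:
  fixes m :: nat and D :: "(real \<times> real) pmf"
    and A :: "'a set" and U :: "'a \<Rightarrow> real \<Rightarrow> real" and r :: "real \<Rightarrow> 'a"
  assumes "m > 0"
    and "set_pmf D \<subseteq> grid m \<times> {0, 1}"
    and "decision_task A U"
    and "best_response A U r"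
  shows "swap_regret A U r D \<le> 2 * SCDL m D + 2 / real m"
  unfolding swap_regret_def
proof (rule cSUP_least)
  show "{\<sigma>. \<forall>a\<in>A. \<sigma> a \<in> A} \<noteq> {}"
    by (auto intro!: exI[of _ id])
  show "measure_pmf.expectation D (\<lambda>(p, y). U (\<sigma> (r p)) y - U (r p) y) \<le> 2 * SCDL m D + 2 / real m"
    if "\<sigma> \<in> {\<sigma>. \<forall>a\<in>A. \<sigma> a \<in> A}" for \<sigma>
    using assms that by (intro expected_swap_gain_le) auto
qed

end
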